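(* Let $d\ge 2$ and $E,F\subset\mathbb F_q^d$. Then $$\sum_{t\in\mathbb F_q}\nu^2(t)\leq q^{-1}|E|^2|F|^2+q^{2d}|F|\,\mathfrak M(E),$$ and $$\sum_{t\in\mathbb F_q}\nu^2(t)\leq q^{-1}|E|^2|F|^2+q^{3d}\Big|\sum_{m\in S_0}\overline{\widehat E(m)}\widehat F(m)\Big|^2+q^{2d}|F|\,\mathfrak M^*(E).$$
   Context: $\mathbb F_q$ is a finite field of characteristic greater than two, $\mathbb F_q^*=\mathbb F_q\setminus\{0\}$, and $\chi$ is a fixed nontrivial additive character of $\mathbb F_q$. For $f:\mathbb F_q^d\to\mathbb C$, $\widehat f(m)=q^{-d}\sum_{x\in\mathbb F_q^d}\chi(-m\cdot x)f(x)$; sets are identified with their indicator functions. For $m\in\mathbb F_q^d$, $\|m\|=m_1^2+\dots+m_d^2$; $S_r=\{x\in\mathbb F_q^d:\|x\|=r\}$. $\nu(t)=|\{(x,y)\in E\times F:\|x-y\|=t\}|$. $\mathfrak M(E)=\max_{r\in\mathbb F_q}\sum_{m\in S_r}|\widehat E(m)|^2$ and $\mathfrak M^*(E)=\max_{r\in\mathbb F_q^*}\sum_{m\in S_r}|\widehat E(m)|^2$. *)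

theory Defs
  imports "HOL-Analysis.Analysis"
begin

text \<open>Vectors in F_q^d are modelled as 'a ^ 'n with 'a a finite field and CARD('n) = d.\<close>

definition dotp :: "'a::comm_ring_1 ^ 'n \<Rightarrow> 'a ^ 'n \<Rightarrow> 'a" where
  "dotp m x = (\<Sum>i\<in>UNIV. m $ i * x $ i)"

definition qnorm :: "'a::comm_ring_1 ^ 'n \<Rightarrow> 'a" where
  "qnorm m = (\<Sum>i\<in>UNIV. (m $ i)^2)"

definition sphere_F :: "'a::comm_ring_1 \<Rightarrow> ('a ^ 'n) set" where
  "sphere_F r = {x. qnorm x = r}"

definition add_char :: "('a::field \<Rightarrow> complex) \<Rightarrow> bool" where
  "add_char \<psi> \<longleftrightarrow> (\<forall>x y. \<psi> (x + y) = \<psi> x * \<psi> y) \<and> (\<forall>x. \<psi> x \<noteq> 0)"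

definition nontrivial_add_char :: "('a::field \<Rightarrow> complex) \<Rightarrow> bool" where
  "nontrivial_add_char \<psi> \<longleftrightarrow> add_char \<psi> \<and> (\<exists>x. \<psi> x \<noteq> 1)"

definition fourier :: "('a::{field,finite} \<Rightarrow> complex) \<Rightarrow> ('a ^ 'n \<Rightarrow> complex) \<Rightarrow> 'a ^ 'n \<Rightarrow> complex" where
  "fourier \<psi> f m = (1 / of_nat (CARD('a) ^ CARD('n))) * (\<Sum>x\<in>UNIV. \<psi> (- dotp m x) * f x)"

definition indic :: "'b set \<Rightarrow> 'b \<Rightarrow> complex" where
  "indic E x = (if x \<in> E then 1 else 0)"

definition nu :: "('a::comm_ring_1 ^ 'n) set \<Rightarrow> ('a ^ 'n) set \<Rightarrow> 'a \<Rightarrow> nat" where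
  "nu E F t = card {(x, y). x \<in> E \<and> y \<in> F \<and> qnorm (x - y) = t}"

definition frakM :: "('a::{field,finite} \<Rightarrow> complex) \<Rightarrow> ('a ^ 'n) set \<Rightarrow> real" where
  "frakM \<psi> E = Max ((\<lambda>r. \<Sum>m\<in>sphere_F r. (cmod (fourier \<psi> (indic E) m))^2) ` UNIV)"

definition frakM_star :: "('a::{field,finite} \<Rightarrow> complex) \<Rightarrow> ('a ^ 'n) set \<Rightarrow> real" where
  "frakM_star \<psi> E = Max ((\<lambda>r. \<Sum>m\<in>sphere_F r. (cmod (fourier \<psi> (indic E) m))^2) ` (UNIV - {0}))"

end

theory Submission
  imports Defs
begin

text \<open>Expanding \<open>nu\<close> in additive characters gives \<open>q * \<Sum>t. nu(t)^2 = \<Sum>s. |T(s)|^2\<close> with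
  \<open>T(s) = \<Sum>x\<in>E. \<Sum>y\<in>F. \<psi>(s * qnorm (x - y))\<close>; the term \<open>s = 0\<close> contributes \<open>|E|^2 |F|^2\<close>.
  For \<open>s = -1/(4b)\<close>, completing the square in the Gauss sum \<open>\<Sum>m. \<psi>(b * qnorm m)\<close>, whose modulus
  is \<open>q^(d/2)\<close>, identifies \<open>|T(s)|\<close> with \<open>q^(3d/2)\<close> times the modulus of
  \<open>\<Sum>m. hat E(m) * cnj (hat F(m)) * \<psi>(b * qnorm m)\<close>. Grouping \<open>m\<close> by spheres and applying Parseval
  in \<open>b\<close> leaves the sum over \<open>r\<close> of the squared moduli of the sphere pairings
  \<open>\<Sum>m\<in>S_r. hat E(m) * cnj (hat F(m))\<close>, which Cauchy-Schwarz on each sphere and Plancherel for \<open>F\<close>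
  bound by \<open>M(E) |F| / q^d\<close>. Keeping the sphere \<open>r = 0\<close> apart gives the second bound.\<close>

lemma add_char_0: "add_char \<psi> \<Longrightarrow> \<psi> 0 = 1"
  unfolding add_char_def by (metis add_0 mult_cancel_left2)

lemma add_char_add: "add_char \<psi> \<Longrightarrow> \<psi> (x + y) = \<psi> x * \<psi> y"
  unfolding add_char_def by blast

lemma add_char_of_nat_mult: "add_char \<psi> \<Longrightarrow> \<psi> (of_nat n * x) = \<psi> x ^ n"
  by (induction n) (simp_all add: add_char_0 add_char_add distrib_right)

lemma norm_add_char:
  fixes \<psi> :: "'a::{field,finite} \<Rightarrow> complex"
  assumes "add_char \<psi>" shows "cmod (\<psi> x) = 1"
proof -
  have "\<psi> x ^ CHAR('a) = 1"
    using add_char_of_nat_mult[OF assms, of "CHAR('a)" x] add_char_0[OF assms] by simp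
  hence "cmod (\<psi> x) ^ CHAR('a) = 1" by (metis norm_one norm_power)
  moreover have "CHAR('a) > 0" by (rule finite_imp_CHAR_pos) simp
  ultimately show ?thesis by (metis norm_ge_zero power_eq_imp_eq_base power_one zero_le_one)
qed

lemma cnj_add_char:
  fixes \<psi> :: "'a::{field,finite} \<Rightarrow> complex"
  assumes "add_char \<psi>" shows "cnj (\<psi> x) = \<psi> (- x)"
proof -
  have "cnj (\<psi> x) * \<psi> x = 1"
    using norm_add_char[OF assms, of x] by (metis complex_norm_square mult.commute of_real_1 power_one)
  moreover have "\<psi> (- x) * \<psi> x = 1"
    using add_char_add[OF assms, of "- x" x] add_char_0[OF assms] by simp
  moreover have "\<psi> x \<noteq> 0" using assms unfolding add_char_def by blast
  ultimately show ?thesis by (metis mult_cancel_right)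
qed

lemma sum_shift_UNIV:
  fixes f :: "'b::{ab_group_add,finite} \<Rightarrow> 'c::comm_monoid_add"
  shows "(\<Sum>x\<in>UNIV. f (x + a)) = (\<Sum>x\<in>UNIV. f x)"
  by (rule sum.reindex_bij_witness[of _ "\<lambda>x. x - a" "\<lambda>x. x + a"]) auto

lemma sum_add_char_linear_eq_0:
  fixes \<psi> :: "'a::field \<Rightarrow> complex" and f :: "'b::{ab_group_add,finite} \<Rightarrow> 'a"
  assumes "add_char \<psi>" and "\<And>x y. f (x + y) = f x + f y" and "\<psi> (f a) \<noteq> 1"
  shows "(\<Sum>x\<in>UNIV. \<psi> (f x)) = 0"
proof -
  let ?S = "\<Sum>x\<in>UNIV. \<psi> (f x)"
  have "?S = (\<Sum>x\<in>UNIV. \<psi> (f (x + a)))" by (rule sum_shift_UNIV[symmetric])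
  also have "\<dots> = \<psi> (f a) * ?S"
    by (simp add: assms(2) add_char_add[OF assms(1)] sum_distrib_left mult.commute)
  finally have "(1 - \<psi> (f a)) * ?S = 0" by (simp add: algebra_simps)
  thus ?thesis using assms(3) by simp
qed

lemma sum_add_char_mult:
  fixes \<psi> :: "'a::{field,finite} \<Rightarrow> complex"
  assumes "nontrivial_add_char \<psi>"
  shows "(\<Sum>u\<in>UNIV. \<psi> (u * c)) = (if c = 0 then of_nat CARD('a) else 0)"
proof -
  have ac: "add_char \<psi>" and "\<exists>w. \<psi> w \<noteq> 1" using assms unfolding nontrivial_add_char_def by auto
  then obtain w where "\<psi> w \<noteq> 1" by blast
  hence "c \<noteq> 0 \<Longrightarrow> \<psi> ((w / c) * c) \<noteq> 1" by simp
  thus ?thesis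
    using sum_add_char_linear_eq_0[OF ac, of "\<lambda>u. u * c" "w / c"]
    by (auto simp: add_char_0[OF ac] distrib_right)
qed

lemma dotp_add_left: "dotp (m + a) v = dotp m v + dotp a v"
  unfolding dotp_def by (simp add: distrib_right sum.distrib)

lemma dotp_diff_right: "dotp m (v - w) = dotp m v - dotp m w"
  unfolding dotp_def by (simp add: right_diff_distrib sum_subtractf)

lemma dotp_commute: "dotp m v = dotp v m"
  unfolding dotp_def by (simp add: mult.commute)

lemma dotp_scale_right: "dotp m (c *s v) = c * dotp m v"
  unfolding dotp_def by (simp add: sum_distrib_left mult_ac)

lemma dotp_scale_left: "dotp (c *s m) v = c * dotp m v"
  unfolding dotp_def by (simp add: sum_distrib_left mult_ac)

lemma dotp_self: "dotp v v = qnorm v"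
  unfolding dotp_def qnorm_def by (simp add: power2_eq_square)

lemma sum_add_char_dotp:
  fixes \<psi> :: "'a::{field,finite} \<Rightarrow> complex" and v :: "'a^'n"
  assumes "nontrivial_add_char \<psi>"
  shows "(\<Sum>m\<in>UNIV. \<psi> (dotp m v)) = (if v = 0 then of_nat (CARD('a)^CARD('n)) else 0)"
proof (cases "v = 0")
  case True
  thus ?thesis using assms by (simp add: dotp_def nontrivial_add_char_def add_char_0)
next
  case False
  have ac: "add_char \<psi>" and "\<exists>w. \<psi> w \<noteq> 1" using assms unfolding nontrivial_add_char_def by auto
  then obtain w where w: "\<psi> w \<noteq> 1" by blast
  obtain i where i: "v $ i \<noteq> 0" using False by (metis vec_eq_iff zero_index)
  define a :: "'a^'n" where "a = (\<chi> j. if j = i then w / v $ i else 0)"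
  have "dotp a v = (\<Sum>j\<in>UNIV. if j = i then w / v $ i * v $ j else 0)"
    unfolding dotp_def a_def by (intro sum.cong) auto
  hence "dotp a v = w" using i by simp
  thus ?thesis
    using sum_add_char_linear_eq_0[OF ac, of "\<lambda>m. dotp m v" a] w False by (simp add: dotp_add_left)
qed

lemma parseval_orthogonal:
  fixes e :: "'m \<Rightarrow> 'x \<Rightarrow> complex" and f :: "'x \<Rightarrow> complex"
  assumes "finite M" and "finite X"
    and orth: "\<And>x y. x \<in> X \<Longrightarrow> y \<in> X \<Longrightarrow> (\<Sum>m\<in>M. e m x * cnj (e m y)) = (if x = y then of_real c else 0)"
  shows "(\<Sum>m\<in>M. (cmod (\<Sum>x\<in>X. e m x * f x))^2) = c * (\<Sum>x\<in>X. (cmod (f x))^2)"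
proof -
  have "complex_of_real (\<Sum>m\<in>M. (cmod (\<Sum>x\<in>X. e m x * f x))^2)
      = (\<Sum>m\<in>M. (\<Sum>x\<in>X. e m x * f x) * cnj (\<Sum>y\<in>X. e m y * f y))"
    by (simp only: of_real_sum complex_norm_square)
  also have "\<dots> = (\<Sum>m\<in>M. \<Sum>x\<in>X. \<Sum>y\<in>X. f x * cnj (f y) * (e m x * cnj (e m y)))"
    by (simp add: cnj_sum sum_product mult_ac)
  also have "\<dots> = (\<Sum>x\<in>X. \<Sum>m\<in>M. \<Sum>y\<in>X. f x * cnj (f y) * (e m x * cnj (e m y)))"
    by (rule sum.swap)
  also have "\<dots> = (\<Sum>x\<in>X. \<Sum>y\<in>X. f x * cnj (f y) * (\<Sum>m\<in>M. e m x * cnj (e m y)))"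
    by (simp only: sum_distrib_left sum.swap[of _ M])
  also have "\<dots> = (\<Sum>x\<in>X. of_real c * (f x * cnj (f x)))"
    by (intro sum.cong refl) (simp add: orth assms(2) sum.delta if_distrib[of "\<lambda>z. _ * z"] cong: if_cong)
  also have "\<dots> = complex_of_real (c * (\<Sum>x\<in>X. (cmod (f x))^2))"
    by (simp only: complex_norm_square of_real_sum of_real_mult sum_distrib_left)
  finally show ?thesis by (simp only: of_real_eq_iff)
qed

lemma parseval_add_char:
  fixes \<psi> :: "'a::{field,finite} \<Rightarrow> complex" and B :: "'a \<Rightarrow> complex"
  assumes nt: "nontrivial_add_char \<psi>"
  shows "(\<Sum>u\<in>UNIV. (cmod (\<Sum>r\<in>UNIV. \<psi> (u * r) * B r))^2) = real CARD('a) * (\<Sum>r\<in>UNIV. (cmod (B r))^2)"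
proof (rule parseval_orthogonal)
  have ac: "add_char \<psi>" using nt unfolding nontrivial_add_char_def by blast
  fix r r' :: 'a
  have "\<psi> (u * r) * cnj (\<psi> (u * r')) = \<psi> (u * (r - r'))" for u
    by (simp add: cnj_add_char[OF ac] add_char_add[OF ac, symmetric] right_diff_distrib)
  thus "(\<Sum>u\<in>UNIV. \<psi> (u * r) * cnj (\<psi> (u * r'))) = (if r = r' then of_real (real CARD('a)) else 0)"
    by (simp add: sum_add_char_mult[OF nt])
qed simp_all

lemma plancherel_fourier:
  fixes \<psi> :: "'a::{field,finite} \<Rightarrow> complex" and f :: "'a^'n \<Rightarrow> complex"
  assumes nt: "nontrivial_add_char \<psi>"
  shows "(\<Sum>m\<in>UNIV. (cmod (fourier \<psi> f m))^2) = (\<Sum>x\<in>UNIV. (cmod (f x))^2) / real CARD('a) ^ CARD('n)"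
proof -
  have ac: "add_char \<psi>" using nt unfolding nontrivial_add_char_def by blast
  have "\<psi> (- dotp m x) * cnj (\<psi> (- dotp m y)) = \<psi> (dotp m (y - x))" for m x y :: "'a^'n"
    by (simp add: cnj_add_char[OF ac] add_char_add[OF ac, symmetric] dotp_diff_right)
  hence "(\<Sum>m\<in>UNIV. (cmod (\<Sum>x\<in>UNIV. \<psi> (- dotp m x) * f x))^2)
      = real CARD('a) ^ CARD('n) * (\<Sum>x\<in>UNIV. (cmod (f x))^2)"
    by (intro parseval_orthogonal) (auto simp: sum_add_char_dotp[OF nt])
  moreover have "(cmod (fourier \<psi> f m))^2
      = (cmod (\<Sum>x\<in>UNIV. \<psi> (- dotp m x) * f x))^2 / (real CARD('a) ^ CARD('n))^2" for m
    by (simp add: fourier_def norm_mult norm_divide norm_power power_divide mult.commute)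
  ultimately show ?thesis
    by (simp add: sum_divide_distrib[symmetric] power2_eq_square)
qed

lemma sum_norm_indic_square: "(\<Sum>x\<in>UNIV. (cmod (indic F x))^2) = real (card (F :: 'b::finite set))"
proof -
  have "(cmod (indic F x))^2 = (if x \<in> F then 1 else 0)" for x by (simp add: indic_def)
  thus ?thesis by (simp add: sum.If_cases)
qed

lemma qnorm_scale: "qnorm (c *s v) = c^2 * qnorm v"
  unfolding qnorm_def by (simp add: sum_distrib_left power_mult_distrib)

lemma qnorm_add: "qnorm (x + y) = qnorm x + qnorm y + 2 * dotp x y"
  unfolding qnorm_def dotp_def
  by (simp add: sum.distrib sum_distrib_left power2_eq_square algebra_simps)

lemma qnorm_minus_commute: "qnorm (y - x) = qnorm (x - y)"
  unfolding qnorm_def by (simp add: power2_commute)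

lemma two_neq_zero_if_CHAR_gt_2:
  assumes "CHAR('a::{field,finite}) > 2" shows "(2::'a) \<noteq> 0"
proof
  assume "(2::'a) = 0"
  hence "CHAR('a) dvd 2" by (metis of_nat_eq_0_iff_char_dvd of_nat_numeral)
  thus False using assms by (auto dest: dvd_imp_le)
qed

lemma gauss_sum_norm_square:
  fixes \<psi> :: "'a::{field,finite} \<Rightarrow> complex"
  assumes nt: "nontrivial_add_char \<psi>" and two: "(2::'a) \<noteq> 0" and b: "b \<noteq> 0"
  shows "(cmod (\<Sum>m\<in>(UNIV::('a^'n) set). \<psi> (b * qnorm m)))^2 = real CARD('a) ^ CARD('n)"
proof -
  have ac: "add_char \<psi>" using nt unfolding nontrivial_add_char_def by blast
  let ?G = "\<Sum>m\<in>(UNIV::('a^'n) set). \<psi> (b * qnorm m)"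
  have diff: "\<psi> (b * qnorm (h + w)) * cnj (\<psi> (b * qnorm w)) = \<psi> (b * qnorm h) * \<psi> (dotp w ((2 * b) *s h))"
    for h w :: "'a^'n"
    by (simp add: cnj_add_char[OF ac] add_char_add[OF ac, symmetric] qnorm_add dotp_scale_right
        dotp_commute[of h w] algebra_simps)
  have "complex_of_real ((cmod ?G)^2) = ?G * cnj ?G" by (rule complex_norm_square)
  also have "\<dots> = (\<Sum>z\<in>(UNIV::('a^'n) set). \<Sum>w\<in>(UNIV::('a^'n) set). \<psi> (b * qnorm z) * cnj (\<psi> (b * qnorm w)))"
    by (simp only: cnj_sum sum_product)
  also have "\<dots> = (\<Sum>w\<in>(UNIV::('a^'n) set). \<Sum>z\<in>(UNIV::('a^'n) set). \<psi> (b * qnorm z) * cnj (\<psi> (b * qnorm w)))"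
    by (rule sum.swap)
  also have "\<dots> = (\<Sum>w\<in>(UNIV::('a^'n) set). \<Sum>h\<in>(UNIV::('a^'n) set). \<psi> (b * qnorm (h + w)) * cnj (\<psi> (b * qnorm w)))"
    by (rule sum.cong[OF refl])
      (rule sum_shift_UNIV[symmetric, where f = "\<lambda>z. \<psi> (b * qnorm z) * cnj (\<psi> (b * qnorm _))"])
  also have "\<dots> = (\<Sum>h\<in>(UNIV::('a^'n) set). \<psi> (b * qnorm h) * (\<Sum>w\<in>UNIV. \<psi> (dotp w ((2 * b) *s h))))"
    by (subst sum.swap) (simp add: diff sum_distrib_left)
  also have "\<dots> = of_nat (CARD('a) ^ CARD('n))"
    by (simp add: sum_add_char_dotp[OF nt] two b if_distrib[of "\<lambda>z. _ * z"] qnorm_def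
        add_char_0[OF ac] cong: if_cong)
  finally have "complex_of_real ((cmod ?G)^2) = complex_of_real (real CARD('a) ^ CARD('n))"
    by simp
  thus ?thesis by (simp only: of_real_eq_iff)
qed

text \<open>Translating by \<open>-v/(2b)\<close> removes the linear term.\<close>

lemma gauss_sum_complete_square:
  fixes \<psi> :: "'a::{field,finite} \<Rightarrow> complex"
  assumes ac: "add_char \<psi>" and two: "(2::'a) \<noteq> 0" and b: "b \<noteq> 0"
  shows "(\<Sum>m\<in>(UNIV::('a^'n) set). \<psi> (b * qnorm m + dotp m v))
       = \<psi> (- qnorm v / (4 * b)) * (\<Sum>m\<in>(UNIV::('a^'n) set). \<psi> (b * qnorm m))"
proof -
  have "(4::'a) \<noteq> 0" using two by (metis mult_2_right mult_eq_0_iff numeral_Bit0)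
  define e where "e = 1 / (4 * b)"
  define c where "c = - 2 * e"
  have e: "4 * b * e = 1" using \<open>4 \<noteq> 0\<close> b by (simp add: e_def)
  have "b * c^2 + c = (4 * b * e) * e - 2 * e" by (simp add: c_def power2_eq_square algebra_simps)
  hence quadratic: "b * c^2 + c = - e" using e by simp
  have "2 * b * c = - (4 * b * e)" by (simp add: c_def algebra_simps)
  hence linear: "2 * b * c + 1 = 0" using e by simp
  have "b * qnorm (z + c *s v) + dotp (z + c *s v) v
      = b * qnorm z + (b * c^2 + c) * qnorm v + (2 * b * c + 1) * dotp z v" for z
    by (simp add: qnorm_add qnorm_scale dotp_add_left dotp_scale_left dotp_scale_right dotp_self
        algebra_simps)
  hence key: "b * qnorm (z + c *s v) + dotp (z + c *s v) v = b * qnorm z + - qnorm v / (4 * b)" for z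
    by (simp add: quadratic linear e_def)
  have "(\<Sum>m\<in>UNIV. \<psi> (b * qnorm m + dotp m v))
      = (\<Sum>z\<in>UNIV. \<psi> (b * qnorm (z + c *s v) + dotp (z + c *s v) v))"
    by (rule sum_shift_UNIV[symmetric, where f = "\<lambda>m. \<psi> (b * qnorm m + dotp m v)"])
  also have "\<dots> = (\<Sum>z\<in>(UNIV::('a^'n) set). \<psi> (b * qnorm z) * \<psi> (- qnorm v / (4 * b)))"
    by (simp only: key add_char_add[OF ac])
  finally show ?thesis by (simp add: sum_distrib_right mult.commute)
qed

definition dist_char_sum :: "('a::{field,finite} \<Rightarrow> complex) \<Rightarrow> ('a^'n) set \<Rightarrow> ('a^'n) set \<Rightarrow> 'a \<Rightarrow> complex" where
  "dist_char_sum \<psi> E F s = (\<Sum>x\<in>E. \<Sum>y\<in>F. \<psi> (s * qnorm (x - y)))"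

lemma sum_add_char_nu:
  fixes \<psi> :: "'a::{field,finite} \<Rightarrow> complex" and E F :: "('a^'n) set"
  shows "(\<Sum>t\<in>UNIV. \<psi> (s * t) * of_nat (nu E F t)) = dist_char_sum \<psi> E F s"
proof -
  let ?g = "\<lambda>p::('a^'n) \<times> ('a^'n). qnorm (fst p - snd p)"
  have "nu E F t = card {p \<in> E \<times> F. ?g p = t}" for t
    unfolding nu_def by (rule arg_cong[where f = card]) auto
  hence "(\<Sum>t\<in>UNIV. \<psi> (s * t) * of_nat (nu E F t)) = (\<Sum>t\<in>UNIV. \<Sum>p\<in>{p \<in> E \<times> F. ?g p = t}. \<psi> (s * ?g p))"
    by (simp add: mult.commute)
  also have "\<dots> = (\<Sum>p\<in>E \<times> F. \<psi> (s * ?g p))"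
    by (rule sum.group) auto
  finally show ?thesis
    unfolding dist_char_sum_def by (simp add: sum.cartesian_product case_prod_beta)
qed

lemma sum_nu_square_eq:
  fixes \<psi> :: "'a::{field,finite} \<Rightarrow> complex" and E F :: "('a^'n) set"
  assumes "nontrivial_add_char \<psi>"
  shows "real CARD('a) * (\<Sum>t\<in>UNIV. (real (nu E F t))^2) = (\<Sum>s\<in>UNIV. (cmod (dist_char_sum \<psi> E F s))^2)"
  using parseval_add_char[OF assms, of "\<lambda>t. of_nat (nu E F t)"]
  by (simp add: sum_add_char_nu)

lemma dist_char_sum_0: "add_char \<psi> \<Longrightarrow> dist_char_sum \<psi> E F 0 = of_nat (card E * card F)"
  by (simp add: dist_char_sum_def add_char_0)

lemma fourier_indic:
  fixes \<psi> :: "'a::{field,finite} \<Rightarrow> complex" and m :: "'a^'n"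
  shows "fourier \<psi> (indic E) m = (\<Sum>x\<in>E. \<psi> (- dotp m x)) / of_nat (CARD('a) ^ CARD('n))"
proof -
  have "(\<Sum>x\<in>UNIV. \<psi> (- dotp m x) * indic E x) = (\<Sum>x\<in>E. \<psi> (- dotp m x))"
    by (simp add: indic_def if_distrib[of "\<lambda>z. _ * z"] sum.If_cases cong: if_cong)
  thus ?thesis by (simp add: fourier_def)
qed

lemma sum_fourier_correlation_twisted:
  fixes \<psi> :: "'a::{field,finite} \<Rightarrow> complex" and E F :: "('a^'n) set"
  assumes ac: "add_char \<psi>" and two: "(2::'a) \<noteq> 0" and b: "b \<noteq> 0"
  shows "(\<Sum>m\<in>UNIV. fourier \<psi> (indic E) m * cnj (fourier \<psi> (indic F) m) * \<psi> (b * qnorm m))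
     = (\<Sum>m\<in>(UNIV::('a^'n) set). \<psi> (b * qnorm m)) * dist_char_sum \<psi> E F (- 1 / (4 * b))
       / (of_nat (CARD('a) ^ CARD('n)))^2"
proof -
  let ?G = "\<Sum>m\<in>(UNIV::('a^'n) set). \<psi> (b * qnorm m)"
  have summand: "\<psi> (- dotp m x) * cnj (\<psi> (- dotp m y)) * \<psi> (b * qnorm m) = \<psi> (b * qnorm m + dotp m (y - x))"
    for m x y :: "'a^'n"
    by (simp add: cnj_add_char[OF ac] add_char_add[OF ac, symmetric] dotp_diff_right algebra_simps)
  have "(\<Sum>m\<in>UNIV. (\<Sum>x\<in>E. \<psi> (- dotp m x)) * cnj (\<Sum>y\<in>F. \<psi> (- dotp m y)) * \<psi> (b * qnorm m))
      = (\<Sum>m\<in>UNIV. \<Sum>x\<in>E. \<Sum>y\<in>F. \<psi> (b * qnorm m + dotp m (y - x)))"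
    by (simp only: cnj_sum sum_product) (simp only: sum_distrib_right summand)
  also have "\<dots> = (\<Sum>x\<in>E. \<Sum>y\<in>F. \<Sum>m\<in>UNIV. \<psi> (b * qnorm m + dotp m (y - x)))"
    by (simp only: sum.swap[of _ UNIV] sum.swap[of _ UNIV F])
  also have "\<dots> = (\<Sum>x\<in>E. \<Sum>y\<in>F. \<psi> ((- 1 / (4 * b)) * qnorm (x - y)) * ?G)"
    by (simp add: gauss_sum_complete_square[OF ac two b] qnorm_minus_commute)
  also have "\<dots> = ?G * dist_char_sum \<psi> E F (- 1 / (4 * b))"
    by (simp add: dist_char_sum_def sum_distrib_left sum_distrib_right mult.commute)
  finally show ?thesis
    by (simp add: fourier_indic power2_eq_square sum_divide_distrib[symmetric] mult_ac)
qed

lemma norm_dist_char_sum_square: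
  fixes \<psi> :: "'a::{field,finite} \<Rightarrow> complex" and E F :: "('a^'n) set"
  assumes nt: "nontrivial_add_char \<psi>" and two: "(2::'a) \<noteq> 0" and b: "b \<noteq> 0"
  shows "(cmod (dist_char_sum \<psi> E F (- 1 / (4 * b))))^2 = (real CARD('a) ^ CARD('n))^3 *
     (cmod (\<Sum>m\<in>UNIV. fourier \<psi> (indic E) m * cnj (fourier \<psi> (indic F) m) * \<psi> (b * qnorm m)))^2"
proof -
  have ac: "add_char \<psi>" using nt unfolding nontrivial_add_char_def by blast
  define R where "R = real CARD('a) ^ CARD('n)"
  have "R > 0" unfolding R_def by simp
  have G: "(cmod (\<Sum>m\<in>(UNIV::('a^'n) set). \<psi> (b * qnorm m)))^2 = R"
    unfolding R_def by (rule gauss_sum_norm_square[OF nt two b])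
  have Q: "cmod (of_nat (CARD('a) ^ CARD('n)) :: complex) = R" by (simp add: R_def norm_power)
  have "(cmod (\<Sum>m\<in>UNIV. fourier \<psi> (indic E) m * cnj (fourier \<psi> (indic F) m) * \<psi> (b * qnorm m)))^2
      = R * (cmod (dist_char_sum \<psi> E F (- 1 / (4 * b))))^2 / R^4"
    by (simp only: sum_fourier_correlation_twisted[OF ac two b] norm_mult norm_divide norm_power Q
        power_mult_distrib power_divide G) (simp flip: power_mult)
  thus ?thesis using \<open>R > 0\<close> by (simp add: R_def[symmetric] field_simps power_numeral_reduce)
qed

definition sphere_pairing :: "('a::{field,finite} \<Rightarrow> complex) \<Rightarrow> ('a^'n) set \<Rightarrow> ('a^'n) set \<Rightarrow> 'a \<Rightarrow> complex" where
  "sphere_pairing \<psi> E F r = (\<Sum>m\<in>sphere_F r. fourier \<psi> (indic E) m * cnj (fourier \<psi> (indic F) m))"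

lemma sum_sphere_F: "(\<Sum>r\<in>UNIV. \<Sum>m\<in>sphere_F r. g m) = (\<Sum>m\<in>(UNIV::('a::{comm_ring_1,finite}^'n) set). g m)"
  using sum.group[of "UNIV::('a^'n) set" "UNIV::'a set" qnorm g] by (simp add: sphere_F_def)

lemma sum_by_qnorm:
  fixes g :: "'a::{comm_ring_1,finite}^'n \<Rightarrow> 'b::semiring_0"
  shows "(\<Sum>m\<in>UNIV. g m * h (qnorm m)) = (\<Sum>r\<in>UNIV. (\<Sum>m\<in>sphere_F r. g m) * h r)"
  by (simp add: sum_sphere_F[symmetric] sphere_F_def sum_distrib_right[symmetric])

lemma sum_norm_dist_char_sum_nonzero_le:
  fixes \<psi> :: "'a::{field,finite} \<Rightarrow> complex" and E F :: "('a^'n) set"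
  assumes nt: "nontrivial_add_char \<psi>" and two: "(2::'a) \<noteq> 0"
  shows "(\<Sum>s\<in>UNIV - {0}. (cmod (dist_char_sum \<psi> E F s))^2)
     \<le> real CARD('a) * (real CARD('a) ^ CARD('n))^3 * (\<Sum>r\<in>UNIV. (cmod (sphere_pairing \<psi> E F r))^2)"
proof -
  have "(4::'a) \<noteq> 0" using two by (metis mult_2_right mult_eq_0_iff numeral_Bit0)
  define R where "R = real CARD('a) ^ CARD('n)"
  let ?T = "dist_char_sum \<psi> E F"
  let ?P = "sphere_pairing \<psi> E F"
  have "(\<Sum>s\<in>UNIV - {0}. (cmod (?T s))^2) = (\<Sum>b\<in>UNIV - {0}. (cmod (?T (- 1 / (4 * b))))^2)"
    by (rule sum.reindex_bij_witness[of _ "\<lambda>b. - 1 / (4 * b)" "\<lambda>b. - 1 / (4 * b)"])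
      (use \<open>4 \<noteq> 0\<close> in auto)
  also have "\<dots> = (\<Sum>b\<in>UNIV - {0}. R^3 * (cmod (\<Sum>r\<in>UNIV. \<psi> (b * r) * ?P r))^2)"
  proof (intro sum.cong refl)
    fix b :: 'a assume "b \<in> UNIV - {0}"
    have "(\<Sum>m\<in>UNIV. fourier \<psi> (indic E) m * cnj (fourier \<psi> (indic F) m) * \<psi> (b * qnorm m))
        = (\<Sum>r\<in>UNIV. \<psi> (b * r) * ?P r)"
      unfolding sum_by_qnorm[where h = "\<lambda>r. \<psi> (b * r)"] sphere_pairing_def
      by (rule sum.cong[OF refl], rule mult.commute)
    thus "(cmod (?T (- 1 / (4 * b))))^2 = R^3 * (cmod (\<Sum>r\<in>UNIV. \<psi> (b * r) * ?P r))^2"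
      using \<open>b \<in> UNIV - {0}\<close> norm_dist_char_sum_square[OF nt two, of b E F] by (simp add: R_def)
  qed
  also have "\<dots> \<le> (\<Sum>b\<in>UNIV. R^3 * (cmod (\<Sum>r\<in>UNIV. \<psi> (b * r) * ?P r))^2)"
    by (rule sum_mono2) (auto simp: R_def)
  also have "\<dots> = R^3 * (real CARD('a) * (\<Sum>r\<in>UNIV. (cmod (?P r))^2))"
    by (simp add: sum_distrib_left[symmetric] parseval_add_char[OF nt])
  finally show ?thesis by (simp add: R_def mult_ac)
qed

lemma sum_nu_square_le_sphere_pairing:
  fixes \<psi> :: "'a::{field,finite} \<Rightarrow> complex" and E F :: "('a^'n) set"
  assumes nt: "nontrivial_add_char \<psi>" and two: "(2::'a) \<noteq> 0"
  shows "(\<Sum>t\<in>UNIV. (real (nu E F t))^2) \<le> real (card E)^2 * real (card F)^2 / real CARD('a)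
     + (real CARD('a) ^ CARD('n))^3 * (\<Sum>r\<in>UNIV. (cmod (sphere_pairing \<psi> E F r))^2)"
proof -
  have ac: "add_char \<psi>" using nt unfolding nontrivial_add_char_def by blast
  have "real CARD('a) * (\<Sum>t\<in>UNIV. (real (nu E F t))^2)
      = (cmod (dist_char_sum \<psi> E F 0))^2 + (\<Sum>s\<in>UNIV - {0}. (cmod (dist_char_sum \<psi> E F s))^2)"
    unfolding sum_nu_square_eq[OF nt] by (rule sum.remove) auto
  moreover have "(cmod (dist_char_sum \<psi> E F 0))^2 = real (card E)^2 * real (card F)^2"
    by (simp add: dist_char_sum_0[OF ac] norm_mult power_mult_distrib)
  moreover have "real CARD('a) > 0" by simp
  ultimately show ?thesis
    using sum_norm_dist_char_sum_nonzero_le[OF nt two, of E F] by (simp add: field_simps)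
qed

lemma norm_sphere_pairing_square_le:
  "(cmod (sphere_pairing \<psi> E F r))^2
     \<le> (\<Sum>m\<in>sphere_F r. (cmod (fourier \<psi> (indic E) m))^2) * (\<Sum>m\<in>sphere_F r. (cmod (fourier \<psi> (indic F) m))^2)"
proof -
  have "cmod (sphere_pairing \<psi> E F r) \<le> (\<Sum>m\<in>sphere_F r. cmod (fourier \<psi> (indic E) m) * cmod (fourier \<psi> (indic F) m))"
    unfolding sphere_pairing_def by (rule order_trans[OF norm_sum]) (simp add: norm_mult)
  hence "(cmod (sphere_pairing \<psi> E F r))^2 \<le> (\<Sum>m\<in>sphere_F r. cmod (fourier \<psi> (indic E) m) * cmod (fourier \<psi> (indic F) m))^2"
    by (rule power_mono) simp
  also have "\<dots> \<le> (\<Sum>m\<in>sphere_F r. (cmod (fourier \<psi> (indic E) m))^2) * (\<Sum>m\<in>sphere_F r. (cmod (fourier \<psi> (indic F) m))^2)"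
    by (rule Cauchy_Schwarz_ineq_sum)
  finally show ?thesis .
qed

lemma sum_sphere_pairing_le:
  fixes \<psi> :: "'a::{field,finite} \<Rightarrow> complex" and E F :: "('a^'n) set"
  assumes nt: "nontrivial_add_char \<psi>" and "A \<noteq> {}"
    and bound: "\<And>r. r \<in> A \<Longrightarrow> (\<Sum>m\<in>sphere_F r. (cmod (fourier \<psi> (indic E) m))^2) \<le> M"
  shows "(\<Sum>r\<in>A. (cmod (sphere_pairing \<psi> E F r))^2) \<le> M * real (card F) / real CARD('a) ^ CARD('n)"
proof -
  let ?Y = "\<lambda>r. \<Sum>m\<in>(sphere_F r :: ('a^'n) set). (cmod (fourier \<psi> (indic F) m))^2"
  have "0 \<le> M" using \<open>A \<noteq> {}\<close> bound by (meson ex_in_conv order_trans sum_nonneg zero_le_power2)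
  have "(\<Sum>r\<in>A. (cmod (sphere_pairing \<psi> E F r))^2) \<le> (\<Sum>r\<in>A. M * ?Y r)"
    by (rule sum_mono, rule order_trans[OF norm_sphere_pairing_square_le],
        rule mult_right_mono[OF bound]) (simp_all add: sum_nonneg)
  also have "\<dots> \<le> (\<Sum>r\<in>UNIV. M * ?Y r)"
    using \<open>0 \<le> M\<close> by (intro sum_mono2) (simp_all add: sum_nonneg)
  also have "\<dots> = M * real (card F) / real CARD('a) ^ CARD('n)"
    by (simp add: sum_distrib_left[symmetric] sum_sphere_F plancherel_fourier[OF nt] sum_norm_indic_square)
  finally show ?thesis .
qed

lemma sphere_energy_le_frakM:
  "(\<Sum>m\<in>sphere_F r. (cmod (fourier \<psi> (indic E) m))^2) \<le> frakM \<psi> E"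
  unfolding frakM_def by (rule Max_ge) auto

lemma sphere_energy_le_frakM_star:
  "r \<noteq> 0 \<Longrightarrow> (\<Sum>m\<in>sphere_F r. (cmod (fourier \<psi> (indic E) m))^2) \<le> frakM_star \<psi> E"
  unfolding frakM_star_def by (rule Max_ge) auto

lemma sum_sphere_pairing_le_frakM:
  fixes \<psi> :: "'a::{field,finite} \<Rightarrow> complex" and E F :: "('a^'n) set"
  assumes "nontrivial_add_char \<psi>"
  shows "(\<Sum>r\<in>UNIV. (cmod (sphere_pairing \<psi> E F r))^2) \<le> frakM \<psi> E * real (card F) / real CARD('a) ^ CARD('n)"
  by (rule sum_sphere_pairing_le[OF assms]) (auto intro: sphere_energy_le_frakM)

lemma sum_sphere_pairing_nonzero_le_frakM_star:
  fixes \<psi> :: "'a::{field,finite} \<Rightarrow> complex" and E F :: "('a^'n) set"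
  assumes "nontrivial_add_char \<psi>"
  shows "(\<Sum>r\<in>UNIV - {0}. (cmod (sphere_pairing \<psi> E F r))^2)
     \<le> frakM_star \<psi> E * real (card F) / real CARD('a) ^ CARD('n)"
  by (rule sum_sphere_pairing_le[OF assms]) (auto intro: sphere_energy_le_frakM_star dest: subsetD[where c = 1])

lemma sum_sphere_pairing_remove_0:
  "(\<Sum>r\<in>UNIV. (cmod (sphere_pairing \<psi> E F r))^2)
     = (cmod (\<Sum>m\<in>sphere_F 0. cnj (fourier \<psi> (indic E) m) * fourier \<psi> (indic F) m))^2
       + (\<Sum>r\<in>UNIV - {0}. (cmod (sphere_pairing \<psi> E F r))^2)"
proof -
  have "sphere_pairing \<psi> E F 0 = cnj (\<Sum>m\<in>sphere_F 0. cnj (fourier \<psi> (indic E) m) * fourier \<psi> (indic F) m)"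
    by (simp add: sphere_pairing_def mult.commute)
  hence "cmod (sphere_pairing \<psi> E F 0)
      = cmod (\<Sum>m\<in>sphere_F 0. cnj (fourier \<psi> (indic E) m) * fourier \<psi> (indic F) m)"
    by (simp only: complex_mod_cnj)
  thus ?thesis by (subst sum.remove[of _ 0]) simp_all
qed

theorem mainTheorem7:
  fixes \<psi> :: "'a::{field,finite} \<Rightarrow> complex"
    and E F :: "('a ^ 'n) set"
  assumes "CHAR('a) > 2"
    and "nontrivial_add_char \<psi>"
    and "CARD('n) \<ge> 2"
  shows "((\<Sum>t\<in>UNIV. (real (nu E F t))^2)
           \<le> real (card E)^2 * real (card F)^2 / real CARD('a)
             + real CARD('a) ^ (2 * CARD('n)) * real (card F) * frakM \<psi> E)
    \<and> ((\<Sum>t\<in>UNIV. (real (nu E F t))^2)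
           \<le> real (card E)^2 * real (card F)^2 / real CARD('a)
             + real CARD('a) ^ (3 * CARD('n))
                 * (cmod (\<Sum>m\<in>sphere_F 0. cnj (fourier \<psi> (indic E) m) * fourier \<psi> (indic F) m))^2
             + real CARD('a) ^ (2 * CARD('n)) * real (card F) * frakM_star \<psi> E)"
proof -
  define R where "R = real CARD('a) ^ CARD('n)"
  define S where "S = (\<lambda>A. \<Sum>r\<in>A. (cmod (sphere_pairing \<psi> E F r))^2)"
  have scale: "R^3 * S A \<le> R^2 * real (card F) * M" if "S A \<le> M * real (card F) / R" for A M
  proof -
    have "R^3 * S A \<le> R^3 * (M * real (card F) / R)"
      using that by (rule mult_left_mono) (simp add: R_def)
    also have "\<dots> = R^2 * real (card F) * M" by (simp add: R_def power2_eq_square power3_eq_cube)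
    finally show ?thesis .
  qed
  have "(\<Sum>t\<in>UNIV. (real (nu E F t))^2) \<le> real (card E)^2 * real (card F)^2 / real CARD('a) + R^3 * S UNIV"
    unfolding R_def S_def
    using sum_nu_square_le_sphere_pairing[OF assms(2) two_neq_zero_if_CHAR_gt_2[OF assms(1)]] .
  moreover have "R^3 * S UNIV \<le> R^2 * real (card F) * frakM \<psi> E"
    by (rule scale) (unfold S_def R_def, rule sum_sphere_pairing_le_frakM[OF assms(2)])
  moreover have "R^3 * S (UNIV - {0}) \<le> R^2 * real (card F) * frakM_star \<psi> E"
    by (rule scale) (unfold S_def R_def, rule sum_sphere_pairing_nonzero_le_frakM_star[OF assms(2)])
  moreover have "R^3 * S UNIV = R^3 * (cmod (\<Sum>m\<in>sphere_F 0. cnj (fourier \<psi> (indic E) m) * fourier \<psi> (indic F) m))^2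
      + R^3 * S (UNIV - {0})"
    unfolding S_def sum_sphere_pairing_remove_0 by (simp only: distrib_left)
  moreover have "real CARD('a) ^ (k * CARD('n)) = R ^ k" for k
    by (simp add: R_def power_mult[symmetric] mult.commute)
  ultimately show ?thesis by (simp only:) linarith
qed

end
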